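(* Let $(\underline{\mathbf{r}},\overline{\mathbf{r}},\mathbf{c},\mathbf{c})$ be a realizable four-tuple of integer vectors with $\underline{\mathbf{r}}$ (length $n_1$) and $\mathbf{c}$ (length $n_2$) non-increasing and $\underline{\mathbf{r}}\le\overline{\mathbf{r}}$. Run the procedure Phase Two described in the context, and let $\mathbf{r}^{(k)}$ and $\overline{\mathbf{r}}^{(k)}$ be the states of $\mathbf{r}$ and $\overline{\mathbf{r}}$ after exactly $k$ iterations of its outer loop. Then $(\mathbf{r}^{(k)},\mathbf{r}^{(k)},\mathbf{c},\mathbf{c})$ is realizable if and only if $k=\delta_2=\Sigma_{n_2}\mathbf{c}-\Sigma_{n_1}\underline{\mathbf{r}}$.
   Context: Inequalities between vectors are componentwise. A four-tuple $(\underline{\mathbf{r}},\overline{\mathbf{r}},\underline{\mathbf{c}},\overline{\mathbf{c}})$ (first two of length $n_1$, last two of length $n_2$) is realizable if there is a bipartite graph $G=(U,V,E)$, $U=\{u_1,\dots,u_{n_1}\}$, $V=\{v_1,\dots,v_{n_2}\}$, with $\underline r_i\le d_G(u_i)\le\overline r_i$ and $\underline c_j\le d_G(v_j)\le\overline c_j$ for all $i,j$. $\Sigma_k\mathbf{x}=\sum_{i=1}^k x_i$. Phase Two: set $\mathbf{r}\leftarrow\underline{\mathbf{r}}$, $\delta_2\leftarrow\Sigma_{n_2}\mathbf{c}-\Sigma_{n_1}\underline{\mathbf{r}}$, $i\leftarrow n_1$; for $k=1,\dots,\delta_2$ (outer loop): while $r_i=\overline r_i$ set $i\leftarrow i-1$;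 let $j=\min\{\ell:r_\ell=r_i\}$; swap $\overline r_i$ and $\overline r_j$; set $r_j\leftarrow r_j+1$. Return $(\mathbf{r},\mathbf{c})$. *)

theory Defs
  imports Main
begin

text \<open>Vectors are lists of integers, indexed from 0 (paper index i corresponds to list index i-1).
  A bipartite graph on U = {u_0..u_(n1-1)}, V = {v_0..v_(n2-1)} is a set of pairs E.\<close>

definition realizable :: "int list \<Rightarrow> int list \<Rightarrow> int list \<Rightarrow> int list \<Rightarrow> bool" where
  "realizable rl rh cl ch \<longleftrightarrow>
     length rl = length rh \<and> length cl = length ch \<and>
     (\<exists>E. E \<subseteq> {0..<length rl} \<times> {0..<length cl} \<and>
        (\<forall>i<length rl. rl ! i \<le> int (card {j. (i, j) \<in> E}) \<and> int (card {j. (i, j) \<in> E}) \<le> rh ! i) \<and>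
        (\<forall>j<length cl. cl ! j \<le> int (card {i. (i, j) \<in> E}) \<and> int (card {i. (i, j) \<in> E}) \<le> ch ! j))"

text \<open>Inner while loop: while r_i = rbar_i, set i := i - 1 (stopping at index 0, a case
  that does not arise in the situation of the lemma).\<close>
fun p2_dec :: "int list \<Rightarrow> int list \<Rightarrow> nat \<Rightarrow> nat" where
  "p2_dec r rb i = (if i = 0 then 0 else if r ! i = rb ! i then p2_dec r rb (i - 1) else i)"

definition p2_step :: "int list \<times> int list \<times> nat \<Rightarrow> int list \<times> int list \<times> nat" where
  "p2_step st = (case st of (r, rb, i) \<Rightarrow>
     (let i' = p2_dec r rb i;
          j = (LEAST l. l < length r \<and> r ! l = r ! i')
      in (r[j := r ! j + 1], rb[i' := rb ! j, j := rb ! i'], i')))"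

definition p2_state :: "int list \<Rightarrow> int list \<Rightarrow> nat \<Rightarrow> int list \<times> int list \<times> nat" where
  "p2_state rlo rhi k = (p2_step ^^ k) (rlo, rhi, length rlo - 1)"

definition p2_r :: "int list \<Rightarrow> int list \<Rightarrow> nat \<Rightarrow> int list" where
  "p2_r rlo rhi k = fst (p2_state rlo rhi k)"

definition p2_rbar :: "int list \<Rightarrow> int list \<Rightarrow> nat \<Rightarrow> int list" where
  "p2_rbar rlo rhi k = fst (snd (p2_state rlo rhi k))"

end

theory Submission
  imports Defs "HOL-Combinatorics.Permutations"
begin

(* Phase Two preserves three facts: r is non-increasing, rows beyond the loop index are tight
   (r_l = rbar_l), and some bipartite graph has column degrees exactly c and row degrees between
   r and rbar. While sum r < sum c, the surplus of the degrees over r sits in rows with slack, so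
   the inner loop stops at a slack row i. Swapping rbar_i and rbar_j for the first row j with
   r_j = r_i only relabels rows of the graph, and every slack row then has r-value at least r_j,
   so an edge can be moved into row j and r_j raised; doing so at the first row of its value block
   keeps r sorted. Hence after k steps sum r = sum rlo + k, and (r, r, c, c) is realizable exactly
   when the witnessing graph has row degrees r, i.e. when sum r = sum c. *)

definition row_deg :: "(nat \<times> nat) set \<Rightarrow> nat \<Rightarrow> nat" where
  "row_deg E i = card {j. (i, j) \<in> E}"

definition col_deg :: "(nat \<times> nat) set \<Rightarrow> nat \<Rightarrow> nat" where
  "col_deg E j = card {i. (i, j) \<in> E}"

definition realizes :: "(nat \<times> nat) set \<Rightarrow> int list \<Rightarrow> int list \<Rightarrow> int list \<Rightarrow> bool" where
  "realizes E rl rh c \<longleftrightarrow> E \<subseteq> {..<length rl} \<times> {..<length c} \<and>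
     (\<forall>i<length rl. rl ! i \<le> int (row_deg E i) \<and> int (row_deg E i) \<le> rh ! i) \<and>
     (\<forall>j<length c. int (col_deg E j) = c ! j)"

lemma realizable_iff_realizes:
  "realizable rl rh c c \<longleftrightarrow> length rl = length rh \<and> (\<exists>E. realizes E rl rh c)"
proof -
  have "(\<forall>j<n. c ! j \<le> f j \<and> f j \<le> c ! j) \<longleftrightarrow> (\<forall>j<n. f j = c ! j)"
    for n and f :: "nat \<Rightarrow> int"
    by (auto simp: order.eq_iff)
  then show ?thesis
    unfolding realizable_def realizes_def row_deg_def col_deg_def atLeast0LessThan by simp
qed

lemma realizes_subset: "realizes E rl rh c \<Longrightarrow> E \<subseteq> {..<length rl} \<times> {..<length c}"
  by (simp add: realizes_def)

lemma realizes_row_deg_ge: "realizes E rl rh c \<Longrightarrow> i < length rl \<Longrightarrow> rl ! i \<le> int (row_deg E i)"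
  by (simp add: realizes_def)

lemma realizes_row_deg_le: "realizes E rl rh c \<Longrightarrow> i < length rl \<Longrightarrow> int (row_deg E i) \<le> rh ! i"
  by (simp add: realizes_def)

lemma realizes_col_deg: "realizes E rl rh c \<Longrightarrow> j < length c \<Longrightarrow> int (col_deg E j) = c ! j"
  by (simp add: realizes_def)

lemma sum_list_list_update:
  "k < length xs \<Longrightarrow> sum_list (xs[k := x]) = sum_list xs + x - xs ! k"
  for xs :: "'a::ab_group_add list"
proof (induction xs arbitrary: k)
  case (Cons a xs) then show ?case by (cases k) (auto simp: algebra_simps)
qed simp

lemma sum_list_eq_sum_lessThan: "sum_list xs = (\<Sum>i<length xs. xs ! i)"
  for xs :: "'a::comm_monoid_add list"
  by (simp add: sum_list_sum_nth atLeast0LessThan)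

subsection \<open>Degree sums\<close>

lemma sum_row_deg_eq_sum_col_deg:
  assumes "E \<subseteq> {..<m} \<times> {..<n}"
  shows "(\<Sum>i<m. row_deg E i) = (\<Sum>j<n. col_deg E j)"
proof -
  have "row_deg E i = (\<Sum>j<n. of_bool ((i, j) \<in> E))" for i
  proof -
    have "row_deg E i = card ({..<n} \<inter> {j. (i, j) \<in> E})"
      unfolding row_deg_def by (rule arg_cong[where f = card]) (use assms in blast)
    then show ?thesis by (simp add: sum_of_bool_eq)
  qed
  moreover have "col_deg E j = (\<Sum>i<m. of_bool ((i, j) \<in> E))" for j
  proof -
    have "col_deg E j = card ({..<m} \<inter> {i. (i, j) \<in> E})"
      unfolding col_deg_def by (rule arg_cong[where f = card]) (use assms in blast)
    then show ?thesis by (simp add: sum_of_bool_eq)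
  qed
  ultimately show ?thesis by (simp only:) (rule sum.swap)
qed

lemma sum_list_eq_sum_row_deg:
  assumes "realizes E r rh c"
  shows "sum_list c = (\<Sum>i<length r. int (row_deg E i))"
proof -
  have "sum_list c = (\<Sum>j<length c. int (col_deg E j))"
    using realizes_col_deg[OF assms] by (simp add: sum_list_eq_sum_lessThan)
  also have "\<dots> = (\<Sum>i<length r. int (row_deg E i))"
    by (simp only: of_nat_sum[symmetric] sum_row_deg_eq_sum_col_deg[OF realizes_subset[OF assms]])
  finally show ?thesis .
qed

lemma realizes_surplus_row:
  assumes "realizes E r rh c" and "sum_list r < sum_list c"
  shows "\<exists>l<length r. r ! l < int (row_deg E l)"
proof -
  have "\<not> (\<forall>l<length r. int (row_deg E l) \<le> r ! l)"
  proof
    assume "\<forall>l<length r. int (row_deg E l) \<le> r ! l"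
    then have "(\<Sum>i<length r. int (row_deg E i)) \<le> sum_list r"
      unfolding sum_list_eq_sum_lessThan by (intro sum_mono) simp
    then show False using assms sum_list_eq_sum_row_deg by fastforce
  qed
  then show ?thesis by (simp add: not_le)
qed

lemma realizable_tight_iff:
  assumes "realizes E r rh c"
  shows "realizable r r c c \<longleftrightarrow> sum_list r = sum_list c"
proof
  assume "realizable r r c c"
  then obtain E' where E': "realizes E' r r c" by (auto simp: realizable_iff_realizes)
  have "sum_list c = (\<Sum>i<length r. int (row_deg E' i))"
    by (rule sum_list_eq_sum_row_deg[OF E'])
  also have "\<dots> = (\<Sum>i<length r. r ! i)"
    using realizes_row_deg_ge[OF E'] realizes_row_deg_le[OF E']
    by (intro sum.cong) (simp_all add: order_antisym)
  finally show "sum_list r = sum_list c" by (simp add: sum_list_eq_sum_lessThan)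
next
  assume sum_eq: "sum_list r = sum_list c"
  have "int (row_deg E i) = r ! i" if "i < length r" for i
  proof (rule ccontr)
    assume "int (row_deg E i) \<noteq> r ! i"
    with that realizes_row_deg_ge[OF assms] have "r ! i < int (row_deg E i)" by force
    with that have "(\<Sum>l<length r. r ! l) < (\<Sum>l<length r. int (row_deg E l))"
      using realizes_row_deg_ge[OF assms] by (intro sum_strict_mono_ex1) auto
    then show False using sum_eq sum_list_eq_sum_row_deg[OF assms]
      by (simp add: sum_list_eq_sum_lessThan)
  qed
  then have "realizes E r r c" using assms by (simp add: realizes_def)
  then show "realizable r r c c" by (auto simp: realizable_iff_realizes)
qed

subsection \<open>Modifying a realization\<close>

lemma realizes_permute_rows:
  assumes E: "realizes E r rh c" and \<sigma>: "\<sigma> permutes {..<length r}"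
    and "length rh' = length r"
    and "\<And>i. i < length r \<Longrightarrow> r ! \<sigma> i = r ! i"
    and "\<And>i. i < length r \<Longrightarrow> rh' ! i = rh ! \<sigma> i"
  shows "realizes {(x, y). (\<sigma> x, y) \<in> E} r rh' c"
proof -
  let ?E = "{(x, y). (\<sigma> x, y) \<in> E}"
  have in_range: "\<sigma> x < length r \<longleftrightarrow> x < length r" for x
    using permutes_in_image[OF \<sigma>] by simp
  have "row_deg ?E i = row_deg E (\<sigma> i)" for i by (simp add: row_deg_def)
  then have "r ! i \<le> int (row_deg ?E i) \<and> int (row_deg ?E i) \<le> rh' ! i" if "i < length r" for i
    using realizes_row_deg_ge[OF E, of "\<sigma> i"] realizes_row_deg_le[OF E, of "\<sigma> i"] that in_range assms(4,5) by simp
  moreover have "col_deg ?E y = col_deg E y" for y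
  proof -
    have "card (\<sigma> -` {x. (x, y) \<in> E}) = card {x. (x, y) \<in> E}"
      by (rule card_vimage_inj[OF permutes_inj[OF \<sigma>]]) (simp add: permutes_surj[OF \<sigma>])
    then show ?thesis by (simp add: col_deg_def)
  qed
  moreover have "?E \<subseteq> {..<length r} \<times> {..<length c}"
    using realizes_subset[OF E] in_range by auto
  ultimately show ?thesis using E assms(3) by (simp add: realizes_def)
qed

lemma realizes_swap_bounds:
  assumes "realizes E r rh c" and "length rh = length r"
    and "a < length r" and "b < length r" and "r ! a = r ! b"
  shows "\<exists>E'. realizes E' r (rh[a := rh ! b, b := rh ! a]) c"
proof -
  have "realizes {(x, y). (transpose a b x, y) \<in> E} r (rh[a := rh ! b, b := rh ! a]) c"
    using assms
    by (intro realizes_permute_rows permutes_swap_id)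
       (auto simp: transpose_def nth_list_update)
  then show ?thesis by blast
qed

lemma move_row_edge:
  assumes "finite E" and "row_deg E j < row_deg E l"
    and "E \<subseteq> A \<times> B" and "j \<in> A"
  shows "\<exists>E'. E' \<subseteq> A \<times> B \<and>
    row_deg E' j = row_deg E j + 1 \<and> row_deg E' l = row_deg E l - 1 \<and>
    (\<forall>i. i \<noteq> j \<and> i \<noteq> l \<longrightarrow> row_deg E' i = row_deg E i) \<and>
    (\<forall>y. col_deg E' y = col_deg E y)"
proof -
  have fin_row: "finite {y. (i, y) \<in> E}" for i
  proof (rule finite_subset)
    show "{y. (i, y) \<in> E} \<subseteq> snd ` E" by force
  qed (use assms(1) in simp)
  have fin_col: "finite {x. (x, y) \<in> E}" for y
  proof (rule finite_subset)
    show "{x. (x, y) \<in> E} \<subseteq> fst ` E" by force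
  qed (use assms(1) in simp)
  have "\<not> {y. (l, y) \<in> E} \<subseteq> {y. (j, y) \<in> E}"
  proof
    assume "{y. (l, y) \<in> E} \<subseteq> {y. (j, y) \<in> E}"
    then have "row_deg E l \<le> row_deg E j" unfolding row_deg_def by (rule card_mono[OF fin_row])
    then show False using assms(2) by simp
  qed
  then obtain y where ly: "(l, y) \<in> E" and jy: "(j, y) \<notin> E" by blast
  have "j \<noteq> l" using assms(2) by auto
  define E' where "E' = insert (j, y) (E - {(l, y)})"
  have "{z. (j, z) \<in> E'} = insert y {z. (j, z) \<in> E}"
    using \<open>j \<noteq> l\<close> by (auto simp: E'_def)
  then have deg_j: "row_deg E' j = row_deg E j + 1"
    using fin_row jy by (simp add: row_deg_def)
  have "{z. (l, z) \<in> E'} = {z. (l, z) \<in> E} - {y}"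
    using \<open>j \<noteq> l\<close> by (auto simp: E'_def)
  then have deg_l: "row_deg E' l = row_deg E l - 1"
    using ly by (simp add: row_deg_def)
  have "{x. (x, y) \<in> E'} = insert j ({x. (x, y) \<in> E} - {l})"
    using \<open>j \<noteq> l\<close> by (auto simp: E'_def)
  then have col_y: "col_deg E' y = col_deg E y"
    using card_Suc_Diff1[OF fin_col, of l y] fin_col ly jy by (simp add: col_deg_def)
  have "E' \<subseteq> A \<times> B" using assms(3,4) ly by (auto simp: E'_def)
  moreover have "\<forall>i. i \<noteq> j \<and> i \<noteq> l \<longrightarrow> row_deg E' i = row_deg E i"
    by (simp add: row_deg_def E'_def)
  moreover have "\<forall>z. col_deg E' z = col_deg E z"
  proof
    show "col_deg E' z = col_deg E z" for z
      using col_y by (cases "z = y") (simp_all add: col_deg_def E'_def)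
  qed
  ultimately show ?thesis using deg_j deg_l by blast
qed

text \<open>If row j has no spare degree, the surplus sum c - sum r lies in a slack row l, which has
  r ! l \<ge> r ! j and hence more edges than row j; one of them is moved to row j.\<close>

lemma realizes_increment:
  assumes E: "realizes E r rh c" and "length rh = length r" and j: "j < length r"
    and slack_j: "r ! j < rh ! j"
    and slack_le: "\<And>l. l < length r \<Longrightarrow> r ! l < rh ! l \<Longrightarrow> r ! j \<le> r ! l"
    and "sum_list r < sum_list c"
  shows "\<exists>E'. realizes E' (r[j := r ! j + 1]) rh c"
proof (cases "r ! j < int (row_deg E j)")
  case True
  then have "realizes E (r[j := r ! j + 1]) rh c"
    using E j by (auto simp: realizes_def nth_list_update)
  then show ?thesis by blast
next
  case False
  then have deg_j: "int (row_deg E j) = r ! j" using realizes_row_deg_ge[OF E j] by simp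
  obtain l where l: "l < length r" "r ! l < int (row_deg E l)"
    using realizes_surplus_row[OF E assms(6)] by blast
  have "r ! l < rh ! l" using l realizes_row_deg_le[OF E] by force
  then have less: "row_deg E j < row_deg E l" using slack_le l deg_j by force
  moreover have "finite E"
    using realizes_subset[OF E] by (rule finite_subset) simp
  ultimately obtain E' where sub: "E' \<subseteq> {..<length r} \<times> {..<length c}"
    and deg'_j: "row_deg E' j = row_deg E j + 1" and deg'_l: "row_deg E' l = row_deg E l - 1"
    and deg'_other: "\<forall>i. i \<noteq> j \<and> i \<noteq> l \<longrightarrow> row_deg E' i = row_deg E i"
    and cols: "\<forall>y. col_deg E' y = col_deg E y"
    using move_row_edge[OF _ _ realizes_subset[OF E]] j by (metis lessThan_iff)
  have "r[j := r ! j + 1] ! i \<le> int (row_deg E' i) \<and> int (row_deg E' i) \<le> rh ! i"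
    if "i < length r" for i
  proof -
    consider "i = j" | "i = l" "i \<noteq> j" | "i \<noteq> j" "i \<noteq> l" by blast
    then show ?thesis
    proof cases
      case 1
      then show ?thesis using deg'_j deg_j slack_j j by simp
    next
      case 2
      then have "int (row_deg E' l) = int (row_deg E l) - 1"
        using deg'_l less by (simp add: of_nat_diff)
      then show ?thesis using 2 l realizes_row_deg_le[OF E l(1)] by simp
    next
      case 3
      then show ?thesis
        using deg'_other realizes_row_deg_ge[OF E that] realizes_row_deg_le[OF E that] by simp
    qed
  qed
  then have "realizes E' (r[j := r ! j + 1]) rh c"
    using sub cols realizes_col_deg[OF E] by (simp add: realizes_def)
  then show ?thesis by blast
qed

lemma sorted_desc_increment:
  fixes r :: "int list"
  assumes "sorted_wrt (\<ge>) r" and "j < length r" and "\<And>l. l < j \<Longrightarrow> r ! j < r ! l"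
  shows "sorted_wrt (\<ge>) (r[j := r ! j + 1])"
  unfolding sorted_wrt_iff_nth_less
proof (intro allI impI)
  fix a b assume ab: "a < b" "b < length (r[j := r ! j + 1])"
  then have "r ! b \<le> r ! a" using assms(1) by (simp add: sorted_wrt_iff_nth_less)
  moreover have "b = j \<Longrightarrow> r ! j < r ! a" using assms(3) ab(1) by simp
  ultimately show "r[j := r ! j + 1] ! b \<le> r[j := r ! j + 1] ! a"
    using ab assms(2) by (auto simp: nth_list_update)
qed

lemma sorted_desc_first_index:
  fixes r :: "'a::linorder list"
  assumes "sorted_wrt (\<ge>) r" and "i < length r"
    and j_def: "j = (LEAST l. l < length r \<and> r ! l = r ! i)"
  shows "j < length r \<and> r ! j = r ! i \<and> j \<le> i \<and> (\<forall>l<j. r ! j < r ! l)"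
proof -
  have j: "j < length r" "r ! j = r ! i"
    unfolding j_def by (rule LeastI2[of _ i]; simp add: assms(2))+
  moreover have "j \<le> i" unfolding j_def by (rule Least_le) (simp add: assms(2))
  moreover have "r ! j < r ! l" if "l < j" for l
  proof -
    have "l < length r" using that j(1) by simp
    then have "r ! l \<noteq> r ! j"
      using not_less_Least[of l "\<lambda>l. l < length r \<and> r ! l = r ! i"] that j(2)
      unfolding j_def by auto
    moreover have "r ! j \<le> r ! l"
      using assms(1) that j(1) by (simp add: sorted_wrt_iff_nth_less)
    ultimately show ?thesis by simp
  qed
  ultimately show ?thesis by blast
qed

subsection \<open>Phase Two\<close>

declare p2_dec.simps [simp del]

lemma p2_dec_le: "p2_dec r rb i \<le> i"
proof (induction r rb i rule: p2_dec.induct)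
  case (1 r rb i)
  then show ?case using p2_dec.simps[of r rb i] by auto
qed

lemma p2_dec_tight: "p2_dec r rb i < l \<Longrightarrow> l \<le> i \<Longrightarrow> r ! l = rb ! l"
proof (induction r rb i rule: p2_dec.induct)
  case (1 r rb i)
  show ?case
  proof (cases "i \<noteq> 0 \<and> r ! i = rb ! i")
    case True
    then show ?thesis using "1" p2_dec.simps[of r rb i] by (cases "l = i") auto
  next
    case False
    then have "p2_dec r rb i = i" using p2_dec.simps[of r rb i] by auto
    then show ?thesis using "1.prems" by simp
  qed
qed

lemma p2_dec_slack: "p2_dec r rb i = 0 \<or> r ! p2_dec r rb i \<noteq> rb ! p2_dec r rb i"
proof (induction r rb i rule: p2_dec.induct)
  case (1 r rb i)
  then show ?case using p2_dec.simps[of r rb i] by (cases "i \<noteq> 0 \<and> r ! i = rb ! i") auto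
qed

lemma p2_dec_finds_slack_row:
  assumes E: "realizes E r rb c" and "sum_list r < sum_list c" and "i \<le> length r - 1"
    and tight: "\<And>l. i < l \<Longrightarrow> l < length r \<Longrightarrow> r ! l = rb ! l"
  shows "p2_dec r rb i < length r \<and> r ! p2_dec r rb i < rb ! p2_dec r rb i"
proof -
  let ?i' = "p2_dec r rb i"
  obtain s where s: "s < length r" "r ! s < int (row_deg E s)"
    using realizes_surplus_row[OF E assms(2)] by blast
  then have slack_s: "r ! s < rb ! s" using realizes_row_deg_le[OF E] by force
  have i': "?i' < length r" using s(1) assms(3) p2_dec_le[of r rb i] by linarith
  have "s \<le> ?i'"
  proof (rule ccontr)
    assume "\<not> s \<le> ?i'"
    then have "r ! s = rb ! s"
      using tight[of s] p2_dec_tight[of r rb i s] s(1) by (metis not_le)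
    then show False using slack_s by simp
  qed
  then have "r ! ?i' \<noteq> rb ! ?i'" using p2_dec_slack[of r rb i] slack_s by auto
  moreover have "r ! ?i' \<le> rb ! ?i'"
    using realizes_row_deg_ge[OF E i'] realizes_row_deg_le[OF E i'] by linarith
  ultimately show ?thesis using i' by simp
qed

lemma realizes_swap_increment:
  assumes E: "realizes E r rb c" and len: "length rb = length r" and sorted: "sorted_wrt (\<ge>) r"
    and i: "i < length r" and slack: "r ! i < rb ! i"
    and tight: "\<And>l. i < l \<Longrightarrow> l < length r \<Longrightarrow> r ! l = rb ! l"
    and j_def: "j = (LEAST l. l < length r \<and> r ! l = r ! i)"
    and less: "sum_list r < sum_list c"
  shows "\<exists>E'. realizes E' (r[j := r ! j + 1]) (rb[i := rb ! j, j := rb ! i]) c"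
proof -
  define rb' where "rb' = rb[i := rb ! j, j := rb ! i]"
  have j: "j < length r" "r ! j = r ! i" "j \<le> i"
    using sorted_desc_first_index[OF sorted i j_def] by blast+
  have len': "length rb' = length r" using len by (simp add: rb'_def)
  have rb'_j: "rb' ! j = rb ! i" using j(1) len by (simp add: rb'_def)
  have rb'_beyond: "rb' ! l = rb ! l" if "i < l" for l
    using that j(3) by (simp add: rb'_def)
  obtain E1 where E1: "realizes E1 r rb' c"
    using realizes_swap_bounds[OF E len i j(1)] j(2) by (auto simp: rb'_def)
  have slack_le: "r ! j \<le> r ! l" if "l < length r" "r ! l < rb' ! l" for l
  proof -
    have "l \<le> i" using that tight[of l] rb'_beyond[of l] by (metis not_le less_irrefl)
    then show ?thesis using sorted j(2) i by (auto simp: sorted_wrt_iff_nth_less le_less)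
  qed
  have "r ! j < rb' ! j" using slack j(2) rb'_j by simp
  from realizes_increment[OF E1 len' j(1) this slack_le less]
  show ?thesis by (simp add: rb'_def)
qed

text \<open>The index bound is stated as i \<le> length r - 1 rather than i < length r so that the
  invariant also holds for empty r, where the loop starts at i = 0.\<close>

definition p2_inv :: "int list \<Rightarrow> int list \<times> int list \<times> nat \<Rightarrow> bool" where
  "p2_inv c st \<longleftrightarrow> (case st of (r, rb, i) \<Rightarrow>
     length rb = length r \<and> i \<le> length r - 1 \<and> sorted_wrt (\<ge>) r \<and>
     (\<forall>l. i < l \<and> l < length r \<longrightarrow> r ! l = rb ! l) \<and> (\<exists>E. realizes E r rb c))"

lemma p2_inv_step:
  assumes inv: "p2_inv c (r, rb, i)" and less: "sum_list r < sum_list c"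
  shows "p2_inv c (p2_step (r, rb, i)) \<and> sum_list (fst (p2_step (r, rb, i))) = sum_list r + 1"
proof -
  obtain E where E: "realizes E r rb c" using inv by (auto simp: p2_inv_def)
  have len: "length rb = length r" and i: "i \<le> length r - 1" and sorted: "sorted_wrt (\<ge>) r"
    and tight: "\<And>l. i < l \<Longrightarrow> l < length r \<Longrightarrow> r ! l = rb ! l"
    using inv by (auto simp: p2_inv_def)
  define i' where "i' = p2_dec r rb i"
  define j where "j = (LEAST l. l < length r \<and> r ! l = r ! i')"
  define rb' where "rb' = rb[i' := rb ! j, j := rb ! i']"
  have step: "p2_step (r, rb, i) = (r[j := r ! j + 1], rb', i')"
    by (simp add: p2_step_def Let_def i'_def j_def rb'_def)
  have i': "i' < length r" and slack_i': "r ! i' < rb ! i'"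
    using p2_dec_finds_slack_row[OF E less i tight] by (simp add: i'_def)+
  have tight': "r ! l = rb ! l" if "i' < l" "l < length r" for l
    using that tight p2_dec_tight[of r rb i l] unfolding i'_def by (metis not_le)
  have j: "j < length r" "j \<le> i'" "\<And>l. l < j \<Longrightarrow> r ! j < r ! l"
    using sorted_desc_first_index[OF sorted i' j_def] by blast+
  obtain E' where "realizes E' (r[j := r ! j + 1]) rb' c"
    using realizes_swap_increment[OF E len sorted i' slack_i' tight' j_def less]
    by (auto simp: rb'_def)
  moreover have "sorted_wrt (\<ge>) (r[j := r ! j + 1])"
    using sorted_desc_increment[OF sorted j(1,3)] .
  moreover have "r[j := r ! j + 1] ! l = rb' ! l" if "i' < l" "l < length r" for l
    using that j(2) tight' by (simp add: rb'_def)
  ultimately have "p2_inv c (r[j := r ! j + 1], rb', i')"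
    using len i' by (auto simp: p2_inv_def rb'_def)
  then show ?thesis using j(1) by (simp add: step sum_list_list_update)
qed

lemma p2_state_inv:
  assumes init: "p2_inv c (rlo, rhi, length rlo - 1)"
    and "int k \<le> sum_list c - sum_list rlo"
  shows "p2_inv c (p2_state rlo rhi k) \<and> sum_list (p2_r rlo rhi k) = sum_list rlo + int k"
  using assms(2)
proof (induction k)
  case 0
  then show ?case using init by (simp add: p2_state_def p2_r_def)
next
  case (Suc k)
  obtain r rb i where state: "p2_state rlo rhi k = (r, rb, i)" by (cases "p2_state rlo rhi k")
  have "p2_inv c (r, rb, i)" and "sum_list r = sum_list rlo + int k"
    using Suc state by (simp add: p2_r_def)+
  moreover have "p2_state rlo rhi (Suc k) = p2_step (r, rb, i)"
    using state by (simp add: p2_state_def)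
  ultimately show ?case
    using p2_inv_step[of c r rb i] Suc.prems by (simp add: p2_r_def)
qed

theorem lemma3:
  fixes rlo rhi c :: "int list" and k :: nat
  assumes "length rhi = length rlo"
    and "sorted_wrt (\<ge>) rlo"
    and "sorted_wrt (\<ge>) c"
    and "list_all2 (\<le>) rlo rhi"
    and "realizable rlo rhi c c"
    and "int k \<le> sum_list c - sum_list rlo"
  shows "realizable (p2_r rlo rhi k) (p2_r rlo rhi k) c c \<longleftrightarrow> int k = sum_list c - sum_list rlo"
proof -
  have "p2_inv c (rlo, rhi, length rlo - 1)"
    using assms(1,2,5) by (auto simp: p2_inv_def realizable_iff_realizes)
  then have inv: "p2_inv c (p2_state rlo rhi k)"
    and sum: "sum_list (p2_r rlo rhi k) = sum_list rlo + int k"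
    using p2_state_inv assms(6) by blast+
  obtain rb i where "p2_state rlo rhi k = (p2_r rlo rhi k, rb, i)"
    by (cases "p2_state rlo rhi k") (simp add: p2_r_def)
  with inv obtain E where "realizes E (p2_r rlo rhi k) rb c"
    by (auto simp: p2_inv_def)
  then show ?thesis using sum by (simp add: realizable_tight_iff eq_diff_eq add.commute)
qed

end
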